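(* There exist absolute constants $c_1,c_2,c_3>0$ such that for every integer $n\ge 1$, every real $m\ge n$, and all distributions $p,q$ over $[n]$, with probability at least $9/10$ over the random variables $\widehat f_1,\dots,\widehat f_n$ the following bounds hold simultaneously: \[ c_1\min\Big(\frac{m^{3/2}\|p-q\|_1}{n^{1/2}}, \frac{m^2\|p-q\|_1^2}{n}\Big) \le \mathbb{E}\big[ Z\mid \widehat f_1,\dots,\widehat f_n \big] \le c_2\frac{m^{3/2}\|p-q\|_1}{n^{1/2}}, \qquad \operatorname{Var}\big[ Z \mid \widehat f_1,\dots,\widehat f_n \big] \le c_3\frac{m^2}{n}. \]
   Context: Let $p,q$ be distributions over $[n]$ and $m>0$. Let $\tilde X_i, X_i\sim\mathrm{Poi}(mp_i)$ and $\tilde Y_i,Y_i\sim \mathrm{Poi}(mq_i)$ ($i\in[n]$), all mutually independent (these are the symbol counts in two independent sets of $\mathrm{Poi}(m)$ samples from each of $p$ and $q$). For $m\ge n$ define $f_i=\max\{\sqrt{mn}\,|p_i-q_i|,\ n(p_i+q_i),\ 1\}$ and $\widehat f_i=\max\Big\{\frac{|\tilde X_i-\tilde Y_i|}{\sqrt{m/n}},\ \frac{\tilde X_i+\tilde Y_i}{m/n},\ 1\Big\}$; for $m<n$ define $f_i=\max\{m(p_i+q_i),1\}$ and $\widehat f_i=\max\{\tilde X_i+\tilde Y_i,1\}$. Let $Z_i=(X_i-Y_i)^2-X_i-Y_i$ and $Z=\sum_{i=1}^n Z_i/\widehat f_i$. $\|p-q\|_1=\sum_i|p_i-q_i|$.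 *)

theory Defs
  imports "HOL-Probability.Probability"
begin

definition poi :: "real \<Rightarrow> nat pmf" where
  "poi r = (if r \<le> 0 then return_pmf 0 else poisson_pmf r)"

text \<open>A distribution over [n] = {0..<n}.\<close>
definition is_distr :: "nat \<Rightarrow> (nat \<Rightarrow> real) \<Rightarrow> bool" where
  "is_distr n p \<longleftrightarrow> (\<forall>i<n. 0 \<le> p i) \<and> (\<Sum>i<n. p i) = 1"

definition counts :: "nat \<Rightarrow> real \<Rightarrow> (nat \<Rightarrow> real) \<Rightarrow> (nat \<Rightarrow> nat) pmf" where
  "counts n m p = Pi_pmf {..<n} 0 (\<lambda>i. poi (m * p i))"

text \<open>Estimate fhat_i from the counts a = tilde X_i, b = tilde Y_i.\<close>
definition fhat :: "nat \<Rightarrow> real \<Rightarrow> nat \<Rightarrow> nat \<Rightarrow> real" where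
  "fhat n m a b = (if real n \<le> m
     then max (\<bar>real a - real b\<bar> / sqrt (m / real n)) (max ((real a + real b) / (m / real n)) 1)
     else max (real a + real b) 1)"

definition Zstat :: "nat \<Rightarrow> (nat \<Rightarrow> real) \<Rightarrow> (nat \<Rightarrow> nat) \<Rightarrow> (nat \<Rightarrow> nat) \<Rightarrow> real" where
  "Zstat n fh X Y = (\<Sum>i<n. ((real (X i) - real (Y i))^2 - real (X i) - real (Y i)) / fh i)"

text \<open>Conditional distribution of Z given the weights fh: since (X,Y) is independent
  of (tilde X, tilde Y), it is the law of Zstat with fh held fixed.\<close>
definition Zcond :: "nat \<Rightarrow> real \<Rightarrow> (nat \<Rightarrow> real) \<Rightarrow> (nat \<Rightarrow> real) \<Rightarrow> (nat \<Rightarrow> real) \<Rightarrow> real pmf" where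
  "Zcond n m p q fh = map_pmf (\<lambda>(X, Y). Zstat n fh X Y) (pair_pmf (counts n m p) (counts n m q))"

definition l1dist :: "nat \<Rightarrow> (nat \<Rightarrow> real) \<Rightarrow> (nat \<Rightarrow> real) \<Rightarrow> real" where
  "l1dist n p q = (\<Sum>i<n. \<bar>p i - q i\<bar>)"

end

(*
  Given the estimates fhat, the statistic Z is a sum of independent terms Z_i / fhat_i of
  Poisson counts.  Writing d_i = m (p_i - q_i) and s_i = m (p_i + q_i), the Poisson moments
  (computed from the Stein-Chen identity) give the conditional mean sum_i d_i^2 / fhat_i and the
  conditional variance sum_i (2 s_i^2 + 4 d_i^2 s_i) / fhat_i^2.

  Each fhat_i is built from an independent copy of the counts and is comparable to f_i in
  expectation: E fhat_i <= 4 f_i, E (1 / fhat_i^2) <= 29 / f_i^2 (fhat_i can only be much smaller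
  than f_i if a count deviates by a constant fraction of its mean, which a fourth-moment bound
  controls) and hence E (1 / fhat_i) <= 15 / f_i.  Since f_i dominates |d_i| / sqrt (m/n) and
  s_i / (m/n), the expectations of the conditional mean, of the conditional variance and of
  sum_i fhat_i are at most 15 sqrt (m/n) m |p - q|_1, 290 m^2 / n and
  4 (m |p - q|_1 / sqrt (m/n) + 3 n); by Markov's inequality, all three exceed 30 times these bounds with probability at most 1/10.
  Finally Cauchy-Schwarz, (sum_i |d_i|)^2 <= (sum_i d_i^2 / fhat_i) (sum_i fhat_i), turns the
  upper bound on sum_i fhat_i into the lower bound on the conditional mean.
*)

theory Submission
  imports Defs
begin

lemma integrable_pmf_nat_iff:
  fixes f :: "nat \<Rightarrow> real"
  shows "integrable (measure_pmf p) f \<longleftrightarrow> summable (\<lambda>k. \<bar>pmf p k * f k\<bar>)"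
  unfolding measure_pmf_eq_density
  by (subst integrable_density) (auto simp: integrable_count_space_nat_iff)

lemma sums_expectation_pmf_nat:
  fixes f :: "nat \<Rightarrow> real"
  assumes "integrable (measure_pmf p) f"
  shows "(\<lambda>k. pmf p k * f k) sums measure_pmf.expectation p f"
proof -
  have "integrable (count_space UNIV) (\<lambda>k. pmf p k * f k)"
    using assms unfolding integrable_pmf_nat_iff integrable_count_space_nat_iff by simp
  moreover have "measure_pmf.expectation p f = (\<integral>k. pmf p k * f k \<partial>count_space UNIV)"
    unfolding measure_pmf_eq_density by (subst integral_density) auto
  ultimately show ?thesis using sums_integral_count_space_nat by metis
qed

lemma pmf_poisson_Suc:
  assumes "r > 0"
  shows "pmf (poisson_pmf r) (Suc k) = r / real (Suc k) * pmf (poisson_pmf r) k"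
  using assms by (simp add: field_simps)

lemma poisson_expectation_shift:
  fixes g :: "nat \<Rightarrow> real"
  assumes r: "r > 0" and int: "integrable (poisson_pmf r) (\<lambda>k. g (Suc k))"
  shows "integrable (poisson_pmf r) (\<lambda>k. real k * g k)"
    and "measure_pmf.expectation (poisson_pmf r) (\<lambda>k. real k * g k)
          = r * measure_pmf.expectation (poisson_pmf r) (\<lambda>k. g (Suc k))"
proof -
  let ?T = "\<lambda>k. pmf (poisson_pmf r) k * (real k * g k)"
  have shift: "?T (Suc k) = r * (pmf (poisson_pmf r) k * g (Suc k))" for k
    using pmf_poisson_Suc[OF r, of k] by (simp del: pmf_poisson of_nat_Suc)
  have "summable (\<lambda>k. \<bar>pmf (poisson_pmf r) k * g (Suc k)\<bar>)"
    using int unfolding integrable_pmf_nat_iff .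
  hence "summable (\<lambda>k. \<bar>?T (Suc k)\<bar>)"
    unfolding shift using summable_mult[of _ "\<bar>r\<bar>"] by (simp add: abs_mult)
  hence "summable (\<lambda>k. \<bar>?T k\<bar>)"
    using summable_Suc_iff[of "\<lambda>k. \<bar>?T k\<bar>"] by simp
  thus int': "integrable (poisson_pmf r) (\<lambda>k. real k * g k)"
    unfolding integrable_pmf_nat_iff .
  have "(\<lambda>k. ?T (Suc k)) sums (r * measure_pmf.expectation (poisson_pmf r) (\<lambda>k. g (Suc k)))"
    unfolding shift by (intro sums_mult sums_expectation_pmf_nat int)
  hence "?T sums (r * measure_pmf.expectation (poisson_pmf r) (\<lambda>k. g (Suc k)))"
    using sums_Suc_iff[of ?T] by simp
  with sums_expectation_pmf_nat[OF int'] show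
    "measure_pmf.expectation (poisson_pmf r) (\<lambda>k. real k * g k)
      = r * measure_pmf.expectation (poisson_pmf r) (\<lambda>k. g (Suc k))"
    using sums_unique2 by blast
qed

lemma integrable_poisson_power:
  assumes r: "r > 0" and c: "c \<ge> 0"
  shows "integrable (poisson_pmf r) (\<lambda>k. (real k + c) ^ j)"
  using c
proof (induction j arbitrary: c)
  case 0
  then show ?case by simp
next
  case (Suc j)
  have "integrable (poisson_pmf r) (\<lambda>k. real k * (real k + c) ^ j)"
    by (rule poisson_expectation_shift(1)[OF r]) (use Suc.IH[of "c + 1"] Suc.prems in \<open>simp add: add_ac\<close>)
  moreover have "integrable (poisson_pmf r) (\<lambda>k. c * (real k + c) ^ j)"
    using Suc by simp
  ultimately have "integrable (poisson_pmf r) (\<lambda>k. real k * (real k + c) ^ j + c * (real k + c) ^ j)"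
    by (rule Bochner_Integration.integrable_add)
  thus ?case by (simp add: algebra_simps)
qed

lemma integrable_poi_power: "r \<ge> 0 \<Longrightarrow> integrable (poi r) (\<lambda>k. real k ^ j)"
  unfolding poi_def using integrable_poisson_power[of r 0 j]
  by (auto intro: integrable_measure_pmf_finite)

definition poi_moment :: "real \<Rightarrow> nat \<Rightarrow> real" where
  "poi_moment r j = measure_pmf.expectation (poi r) (\<lambda>k. real k ^ j)"

lemma expectation_poi_polynomial:
  assumes "r \<ge> 0"
  shows "measure_pmf.expectation (poi r) (\<lambda>k. \<Sum>j\<le>d. c j * real k ^ j) = (\<Sum>j\<le>d. c j * poi_moment r j)"
  unfolding poi_moment_def
  by (subst Bochner_Integration.integral_sum) (auto intro!: integrable_poi_power assms)

lemma poi_moment_Suc: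
  assumes "r \<ge> 0"
  shows "poi_moment r (Suc j) = r * (\<Sum>i\<le>j. of_nat (j choose i) * poi_moment r i)"
proof (cases "r = 0")
  case True
  then show ?thesis by (simp add: poi_moment_def poi_def)
next
  case False
  hence r: "r > 0" using assms by simp
  have binomial: "real (Suc k) ^ j = (\<Sum>i\<le>j. of_nat (j choose i) * real k ^ i)" for k
    using binomial_ring[of "real k" 1 j] by (simp add: add.commute)
  have "poi_moment r (Suc j) = measure_pmf.expectation (poisson_pmf r) (\<lambda>k. real k * real k ^ j)"
    using r by (simp add: poi_moment_def poi_def)
  also have "\<dots> = r * measure_pmf.expectation (poisson_pmf r) (\<lambda>k. real (Suc k) ^ j)"
    using integrable_poisson_power[OF r, of 1 j] by (intro poisson_expectation_shift(2) r) (simp add: add.commute)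
  also have "measure_pmf.expectation (poisson_pmf r) (\<lambda>k. real (Suc k) ^ j)
      = measure_pmf.expectation (poi r) (\<lambda>k. \<Sum>i\<le>j. of_nat (j choose i) * real k ^ i)"
    using r by (simp only: binomial poi_def) simp
  also have "\<dots> = (\<Sum>i\<le>j. of_nat (j choose i) * poi_moment r i)"
    by (rule expectation_poi_polynomial) (use r in simp)
  finally show ?thesis .
qed

lemma poi_moments:
  assumes "r \<ge> 0"
  shows "poi_moment r 0 = 1" "poi_moment r 1 = r" "poi_moment r 2 = r^2 + r"
    "poi_moment r 3 = r^3 + 3*r^2 + r" "poi_moment r 4 = r^4 + 6*r^3 + 7*r^2 + r"
proof -
  note rec = poi_moment_Suc[OF assms]
  show m0: "poi_moment r 0 = 1" by (simp add: poi_moment_def)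
  show m1: "poi_moment r 1 = r" using rec[of 0] m0 by simp
  show m2: "poi_moment r 2 = r^2 + r" using rec[of 1] m0 m1
    by (simp add: numeral_eq_Suc power2_eq_square algebra_simps)
  show m3: "poi_moment r 3 = r^3 + 3*r^2 + r" using rec[of 2] m0 m1 m2
    by (simp add: numeral_eq_Suc power2_eq_square power3_eq_cube algebra_simps)
  show "poi_moment r 4 = r^4 + 6*r^3 + 7*r^2 + r" using rec[of 3] m0 m1 m2 m3
    by (simp add: numeral_eq_Suc power2_eq_square power3_eq_cube algebra_simps)
qed

definition poi_central_moment :: "real \<Rightarrow> nat \<Rightarrow> real" where
  "poi_central_moment r i = measure_pmf.expectation (poi r) (\<lambda>k. (real k - r) ^ i)"

lemma centered_power_expand:
  "(real k - r) ^ i = (\<Sum>t\<le>i. (of_nat (i choose t) * (- r) ^ (i - t)) * real k ^ t)"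
  using binomial_ring[of "real k" "-r" i] by (simp add: algebra_simps)

lemma integrable_poi_centered_power: "r \<ge> 0 \<Longrightarrow> integrable (poi r) (\<lambda>k. (real k - r) ^ i)"
  unfolding centered_power_expand by (auto intro!: integrable_poi_power)

lemma poi_central_moment_expand:
  "r \<ge> 0 \<Longrightarrow> poi_central_moment r i = (\<Sum>t\<le>i. (of_nat (i choose t) * (- r) ^ (i - t)) * poi_moment r t)"
  unfolding poi_central_moment_def centered_power_expand by (rule expectation_poi_polynomial)

lemma poi_central_moments:
  assumes "r \<ge> 0"
  shows "poi_central_moment r 0 = 1" "poi_central_moment r (Suc 0) = 0" "poi_central_moment r 2 = r"
    "poi_central_moment r 3 = r" "poi_central_moment r 4 = r + 3 * r^2"
  using poi_moments[OF assms]
  by (simp_all add: poi_central_moment_expand[OF assms] numeral_eq_Suc power2_eq_square power3_eq_cube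
      algebra_simps)

lemma Pi_pmf_component_map:
  fixes R :: "'i \<Rightarrow> 'a pmf"
  assumes "finite I" "k \<in> I"
  shows "map_pmf (\<lambda>h. h k) (Pi_pmf I d R) = R k"
  using assms by (subst Pi_pmf_component) auto

lemma integrable_Pi_pmf_component:
  fixes F :: "'a \<Rightarrow> real" and R :: "'i \<Rightarrow> 'a pmf"
  assumes "finite I" "k \<in> I" "integrable (R k) F"
  shows "integrable (Pi_pmf I d R) (\<lambda>h. F (h k))"
  using assms(3) by (simp flip: Pi_pmf_component_map[OF assms(1,2), of d R])

lemma expectation_Pi_pmf_component:
  fixes F :: "'a \<Rightarrow> real" and R :: "'i \<Rightarrow> 'a pmf"
  assumes "finite I" "k \<in> I"
  shows "measure_pmf.expectation (Pi_pmf I d R) (\<lambda>h. F (h k)) = measure_pmf.expectation (R k) F"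
  by (simp flip: Pi_pmf_component_map[OF assms, of d R])

lemma
  fixes F :: "'i \<Rightarrow> 'a \<Rightarrow> real" and R :: "'i \<Rightarrow> 'a pmf"
  assumes fin: "finite I" and J: "J \<subseteq> I" and int: "\<And>k. k \<in> J \<Longrightarrow> integrable (R k) (F k)"
  shows expectation_Pi_pmf_prod: "measure_pmf.expectation (Pi_pmf I d R) (\<lambda>h. \<Prod>k\<in>J. F k (h k))
      = (\<Prod>k\<in>J. measure_pmf.expectation (R k) (F k))"
    and integrable_Pi_pmf_prod: "integrable (Pi_pmf I d R) (\<lambda>h. \<Prod>k\<in>J. F k (h k))"
proof -
  have "prob_space.indep_vars (measure_pmf (Pi_pmf I d R)) (\<lambda>_. count_space UNIV) (\<lambda>x f. f x) J"
    by (rule prob_space.indep_vars_subset[OF measure_pmf.prob_space_axioms indep_vars_Pi_pmf[OF fin] J])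
  hence indep: "prob_space.indep_vars (measure_pmf (Pi_pmf I d R)) (\<lambda>_. borel) (\<lambda>k h. F k (h k)) J"
    by (rule prob_space.indep_vars_compose2[OF measure_pmf.prob_space_axioms]) simp
  have finJ: "finite J" using fin J finite_subset by blast
  have intk: "\<And>k. k \<in> J \<Longrightarrow> integrable (Pi_pmf I d R) (\<lambda>h. F k (h k))"
    using J by (intro integrable_Pi_pmf_component[OF fin] int) auto
  show "integrable (Pi_pmf I d R) (\<lambda>h. \<Prod>k\<in>J. F k (h k))"
    by (rule prob_space.indep_vars_integrable[OF measure_pmf.prob_space_axioms finJ indep intk])
  have "measure_pmf.expectation (Pi_pmf I d R) (\<lambda>h. \<Prod>k\<in>J. F k (h k))
     = (\<Prod>k\<in>J. measure_pmf.expectation (Pi_pmf I d R) (\<lambda>h. F k (h k)))"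
    by (rule prob_space.indep_vars_lebesgue_integral[OF measure_pmf.prob_space_axioms finJ indep intk])
  also have "\<dots> = (\<Prod>k\<in>J. measure_pmf.expectation (R k) (F k))"
    using J by (intro prod.cong refl expectation_Pi_pmf_component[OF fin]) auto
  finally show "measure_pmf.expectation (Pi_pmf I d R) (\<lambda>h. \<Prod>k\<in>J. F k (h k))
      = (\<Prod>k\<in>J. measure_pmf.expectation (R k) (F k))" .
qed

text \<open>Independent centered summands are uncorrelated, so the second moment of their sum is additive.\<close>

lemma expectation_Pi_pmf_sum_square:
  fixes Y :: "'i \<Rightarrow> 'a \<Rightarrow> real" and R :: "'i \<Rightarrow> 'a pmf"
  assumes fin: "finite I"
    and int: "\<And>i. i \<in> I \<Longrightarrow> integrable (R i) (Y i)"
    and int2: "\<And>i. i \<in> I \<Longrightarrow> integrable (R i) (\<lambda>x. (Y i x)^2)"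
    and centered: "\<And>i. i \<in> I \<Longrightarrow> measure_pmf.expectation (R i) (Y i) = 0"
  shows "measure_pmf.expectation (Pi_pmf I d R) (\<lambda>h. (\<Sum>i\<in>I. Y i (h i))^2)
      = (\<Sum>i\<in>I. measure_pmf.expectation (R i) (\<lambda>x. (Y i x)^2))"
proof -
  let ?P = "Pi_pmf I d R"
  have cross: "integrable ?P (\<lambda>h. Y i (h i) * Y j (h j)) \<and>
      measure_pmf.expectation ?P (\<lambda>h. Y i (h i) * Y j (h j))
        = (if i = j then measure_pmf.expectation (R i) (\<lambda>x. (Y i x)^2) else 0)"
    if ij: "i \<in> I" "j \<in> I" for i j
  proof (cases "i = j")
    case True
    have "integrable ?P (\<lambda>h. (Y i (h i))^2)"
      by (rule integrable_Pi_pmf_component[OF fin ij(1)]) (rule int2[OF ij(1)])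
    moreover have "measure_pmf.expectation ?P (\<lambda>h. (Y i (h i))^2)
        = measure_pmf.expectation (R i) (\<lambda>x. (Y i x)^2)"
      by (rule expectation_Pi_pmf_component[OF fin ij(1)])
    ultimately show ?thesis using True by (simp add: power2_eq_square)
  next
    case False
    have pair: "(\<lambda>h. \<Prod>k\<in>{i,j}. Y k (h k)) = (\<lambda>h. Y i (h i) * Y j (h j))"
      using False by (simp add: fun_eq_iff)
    have "integrable ?P (\<lambda>h. \<Prod>k\<in>{i,j}. Y k (h k))"
      by (rule integrable_Pi_pmf_prod) (use fin ij int in auto)
    moreover have "measure_pmf.expectation ?P (\<lambda>h. \<Prod>k\<in>{i,j}. Y k (h k))
        = (\<Prod>k\<in>{i,j}. measure_pmf.expectation (R k) (Y k))"
      by (rule expectation_Pi_pmf_prod) (use fin ij int in auto)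
    ultimately show ?thesis using centered[OF ij(1)] False unfolding pair by simp
  qed
  have "measure_pmf.expectation ?P (\<lambda>h. (\<Sum>i\<in>I. Y i (h i))^2)
      = measure_pmf.expectation ?P (\<lambda>h. \<Sum>i\<in>I. \<Sum>j\<in>I. Y i (h i) * Y j (h j))"
    by (simp add: power2_eq_square sum_product)
  also have "\<dots> = (\<Sum>i\<in>I. \<Sum>j\<in>I. measure_pmf.expectation ?P (\<lambda>h. Y i (h i) * Y j (h j)))"
    using cross
    by (subst Bochner_Integration.integral_sum, fastforce intro!: Bochner_Integration.integrable_sum)
       (intro sum.cong refl Bochner_Integration.integral_sum, auto)
  also have "\<dots> = (\<Sum>i\<in>I. measure_pmf.expectation (R i) (\<lambda>x. (Y i x)^2))"
    using cross fin by (simp add: sum.delta cong: sum.cong)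
  finally show ?thesis .
qed

lemma pair_pmf_as_Pi_pmf:
  "pair_pmf A B = map_pmf (\<lambda>h. (h True, h False)) (Pi_pmf UNIV d (\<lambda>b. if b then A else B))"
proof -
  have U: "(UNIV :: bool set) = insert True {False}" by auto
  have "Pi_pmf UNIV d (\<lambda>b. if b then A else B)
     = map_pmf (\<lambda>(y,f). f(True:=y)) (pair_pmf A (Pi_pmf {False} d (\<lambda>b. if b then A else B)))"
    unfolding U by (subst Pi_pmf_insert) auto
  also have "Pi_pmf {False} d (\<lambda>b. if b then A else B) = map_pmf (\<lambda>a b. if b = False then a else d) B"
    by (subst Pi_pmf_singleton) simp
  also have "pair_pmf A (map_pmf (\<lambda>a b. if b = False then a else d) B)
     = map_pmf (apsnd (\<lambda>a b. if b = False then a else d)) (pair_pmf A B)"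
    by (rule pair_map_pmf2)
  finally have "map_pmf (\<lambda>h. (h True, h False)) (Pi_pmf UNIV d (\<lambda>b. if b then A else B))
     = map_pmf ((\<lambda>h. (h True, h False)) \<circ> (\<lambda>(y,f). f(True:=y))
         \<circ> apsnd (\<lambda>a b. if b = False then a else d)) (pair_pmf A B)"
    by (simp only: pmf.map_comp comp_assoc)
  also have "(\<lambda>h. (h True, h False)) \<circ> (\<lambda>(y,f). f(True:=y))
      \<circ> apsnd (\<lambda>a b. if b = False then a else d) = id"
    by (auto simp: fun_eq_iff)
  finally show ?thesis by simp
qed

lemma
  fixes f g :: "'a \<Rightarrow> real" and A B :: "'a pmf"
  assumes "integrable A f" "integrable B g"
  shows integrable_pair_pmf_mult: "integrable (pair_pmf A B) (\<lambda>x. f (fst x) * g (snd x))"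
    and expectation_pair_pmf_mult: "measure_pmf.expectation (pair_pmf A B) (\<lambda>x. f (fst x) * g (snd x))
         = measure_pmf.expectation A f * measure_pmf.expectation B g"
proof -
  define R where "R = (\<lambda>b. if b then A else B)"
  define F where "F = (\<lambda>b. if b then f else g)"
  have U: "(UNIV :: bool set) = {True, False}" by auto
  have prod: "(\<lambda>h. \<Prod>b\<in>UNIV. F b (h b)) = (\<lambda>h. f (h True) * g (h False))"
    unfolding U F_def by (auto simp: fun_eq_iff)
  have int: "\<And>b. b \<in> UNIV \<Longrightarrow> integrable (R b) (F b)"
    using assms unfolding R_def F_def by auto
  note pair = pair_pmf_as_Pi_pmf[of A B undefined, folded R_def]
  have "integrable (Pi_pmf UNIV undefined R) (\<lambda>h. \<Prod>b\<in>UNIV. F b (h b))"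
    by (rule integrable_Pi_pmf_prod) (use int in auto)
  thus "integrable (pair_pmf A B) (\<lambda>x. f (fst x) * g (snd x))"
    unfolding pair prod by simp
  have "measure_pmf.expectation (Pi_pmf UNIV undefined R) (\<lambda>h. \<Prod>b\<in>UNIV. F b (h b))
      = (\<Prod>b\<in>UNIV. measure_pmf.expectation (R b) (F b))"
    by (rule expectation_Pi_pmf_prod) (use int in auto)
  thus "measure_pmf.expectation (pair_pmf A B) (\<lambda>x. f (fst x) * g (snd x))
         = measure_pmf.expectation A f * measure_pmf.expectation B g"
    unfolding pair prod by (simp add: U R_def F_def)
qed

lemma pair_pmf_Pi_pmf:
  assumes A: "finite A"
  shows "pair_pmf (Pi_pmf A d1 P) (Pi_pmf A d2 Q)
    = map_pmf (\<lambda>h. (\<lambda>i. fst (h i), \<lambda>i. snd (h i))) (Pi_pmf A (d1, d2) (\<lambda>i. pair_pmf (P i) (Q i)))"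
proof (rule pmf_eqI)
  fix z :: "('a \<Rightarrow> 'b) \<times> ('a \<Rightarrow> 'c)"
  obtain f g where z: "z = (f, g)" by (cases z)
  define G :: "('a \<Rightarrow> 'b \<times> 'c) \<Rightarrow> ('a \<Rightarrow> 'b) \<times> ('a \<Rightarrow> 'c)" where
    "G = (\<lambda>h. (\<lambda>i. fst (h i), \<lambda>i. snd (h i)))"
  have inj: "inj G" unfolding G_def inj_def by (auto simp: fun_eq_iff prod_eq_iff)
  have "pmf (map_pmf G (Pi_pmf A (d1, d2) (\<lambda>i. pair_pmf (P i) (Q i)))) z
      = pmf (Pi_pmf A (d1, d2) (\<lambda>i. pair_pmf (P i) (Q i))) (\<lambda>i. (f i, g i))"
    unfolding z using pmf_map_inj'[OF inj, of _ "\<lambda>i. (f i, g i)"] by (simp add: G_def)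
  also have "\<dots> = pmf (pair_pmf (Pi_pmf A d1 P) (Pi_pmf A d2 Q)) z"
    using A by (auto simp: z pmf_Pi pmf_pair prod.distrib)
  finally show "pmf (pair_pmf (Pi_pmf A d1 P) (Pi_pmf A d2 Q)) z
    = pmf (map_pmf (\<lambda>h. (\<lambda>i. fst (h i), \<lambda>i. snd (h i))) (Pi_pmf A (d1, d2) (\<lambda>i. pair_pmf (P i) (Q i)))) z"
    unfolding G_def by simp
qed

abbreviation poi2 :: "real \<Rightarrow> real \<Rightarrow> (nat \<times> nat) pmf" where
  "poi2 l u \<equiv> pair_pmf (poi l) (poi u)"

lemma
  assumes "l \<ge> 0" "u \<ge> 0"
  shows integrable_poi2_centered_monomial:
      "integrable (poi2 l u) (\<lambda>x. (real (fst x) - l) ^ i * (real (snd x) - u) ^ j)"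
    and expectation_poi2_centered_monomial:
      "measure_pmf.expectation (poi2 l u) (\<lambda>x. (real (fst x) - l) ^ i * (real (snd x) - u) ^ j)
         = poi_central_moment l i * poi_central_moment u j"
  using integrable_pair_pmf_mult[OF integrable_poi_centered_power[OF assms(1)] integrable_poi_centered_power[OF assms(2)]]
    expectation_pair_pmf_mult[OF integrable_poi_centered_power[OF assms(1)] integrable_poi_centered_power[OF assms(2)]]
  unfolding poi_central_moment_def by auto

text \<open>Bivariate polynomials are encoded as lists of monomials \<open>(c, i, j) \<mapsto> c x\<^sup>i y\<^sup>j\<close>.\<close>

definition monomial_sum :: "(real \<times> nat \<times> nat) list \<Rightarrow> real \<Rightarrow> real \<Rightarrow> real" where
  "monomial_sum ts x y = sum_list (map (\<lambda>(c, i, j). c * x ^ i * y ^ j) ts)"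

definition central_moment_sum :: "(real \<times> nat \<times> nat) list \<Rightarrow> real \<Rightarrow> real \<Rightarrow> real" where
  "central_moment_sum ts l u = sum_list (map (\<lambda>(c, i, j). c * poi_central_moment l i * poi_central_moment u j) ts)"

lemma integrable_expectation_poi2_monomial_sum:
  assumes l: "l \<ge> 0" and u: "u \<ge> 0"
  shows "integrable (poi2 l u) (\<lambda>x. monomial_sum ts (real (fst x) - l) (real (snd x) - u))
    \<and> measure_pmf.expectation (poi2 l u) (\<lambda>x. monomial_sum ts (real (fst x) - l) (real (snd x) - u))
         = central_moment_sum ts l u"
proof (induction ts)
  case Nil
  then show ?case by (simp add: monomial_sum_def central_moment_sum_def)
next
  case (Cons t ts)
  obtain c i j where t: "t = (c, i, j)" by (cases t) auto
  have split: "(\<lambda>x. monomial_sum (t # ts) (real (fst x) - l) (real (snd x) - u))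
     = (\<lambda>x. c * ((real (fst x) - l) ^ i * (real (snd x) - u) ^ j)
          + monomial_sum ts (real (fst x) - l) (real (snd x) - u))"
    by (simp add: t monomial_sum_def fun_eq_iff mult.assoc)
  have "integrable (poi2 l u) (\<lambda>x. c * ((real (fst x) - l) ^ i * (real (snd x) - u) ^ j))"
    using integrable_poi2_centered_monomial[OF l u] by simp
  then show ?case
    unfolding split using Cons.IH expectation_poi2_centered_monomial[OF l u, of i j]
    by (simp add: t central_moment_sum_def)
qed

definition zterm :: "nat \<Rightarrow> nat \<Rightarrow> real" where
  "zterm a b = (real a - real b)^2 - real a - real b"

text \<open>In each of the following moment computations, \<open>ts\<close> is the expansion of the integrand in
  powers of the centered counts \<open>X - l\<close> and \<open>Y - u\<close>; it is checked by \<open>algebra\<close>.\<close>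

lemma
  assumes l: "l \<ge> 0" and u: "u \<ge> 0"
  shows integrable_poi2_zterm: "integrable (poi2 l u) (\<lambda>x. zterm (fst x) (snd x))"
    and expectation_poi2_zterm:
      "measure_pmf.expectation (poi2 l u) (\<lambda>x. zterm (fst x) (snd x)) = (l - u)^2"
proof -
  let ?f = "\<lambda>x. zterm (fst x) (snd x)"
  define ts :: "(real \<times> nat \<times> nat) list" where
    "ts = [(- u + u^2 - l - 2*l*u + l^2, 0, 0), (- 1 + 2*u - 2*l, 0, 1), (1, 0, 2),
      (- 1 - 2*u + 2*l, 1, 0), (- 2, 1, 1), (1, 2, 0)]"
  have expand: "?f = (\<lambda>x. monomial_sum ts (real (fst x) - l) (real (snd x) - u))"
    by (rule ext) (simp add: ts_def monomial_sum_def zterm_def; algebra)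
  note moments = integrable_expectation_poi2_monomial_sum[OF l u, of ts]
  show "integrable (poi2 l u) ?f"
    unfolding expand using moments ..
  have "central_moment_sum ts l u = (l - u)^2"
    by (simp add: ts_def central_moment_sum_def poi_central_moments[OF l] poi_central_moments[OF u]; algebra)
  then show "measure_pmf.expectation (poi2 l u) ?f = (l - u)^2"
    unfolding expand using moments by simp
qed

lemma
  assumes l: "l \<ge> 0" and u: "u \<ge> 0"
  shows integrable_poi2_zterm_centered_square: "integrable (poi2 l u) (\<lambda>x. (zterm (fst x) (snd x) - (l - u)^2)^2)"
    and expectation_poi2_zterm_centered_square:
      "measure_pmf.expectation (poi2 l u) (\<lambda>x. (zterm (fst x) (snd x) - (l - u)^2)^2) = 2 * (l + u)^2 + 4 * (l - u)^2 * (l + u)"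
proof -
  let ?f = "\<lambda>x. (zterm (fst x) (snd x) - (l - u)^2)^2"
  define ts :: "(real \<times> nat \<times> nat) list" where
    "ts = [(u^2 + 2*l*u + l^2, 0, 0), (2*u - 4*u^2 + 2*l + 4*l^2, 0, 1),
      (1 - 6*u + 4*u^2 + 2*l - 8*l*u + 4*l^2, 0, 2), (- 2 + 4*u - 4*l, 0, 3), (1, 0, 4),
      (2*u + 4*u^2 + 2*l - 4*l^2, 1, 0), (2 + 4*u - 8*u^2 + 4*l + 16*l*u - 8*l^2, 1, 1),
      (2 - 12*u + 12*l, 1, 2), (- 4, 1, 3), (1 + 2*u + 4*u^2 - 6*l - 8*l*u + 4*l^2, 2, 0),
      (2 + 12*u - 12*l, 2, 1), (6, 2, 2), (- 2 - 4*u + 4*l, 3, 0), (- 4, 3, 1), (1, 4, 0)]"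
  have expand: "?f = (\<lambda>x. monomial_sum ts (real (fst x) - l) (real (snd x) - u))"
    by (rule ext) (simp add: ts_def monomial_sum_def zterm_def; algebra)
  note moments = integrable_expectation_poi2_monomial_sum[OF l u, of ts]
  show "integrable (poi2 l u) ?f"
    unfolding expand using moments ..
  have "central_moment_sum ts l u = 2 * (l + u)^2 + 4 * (l - u)^2 * (l + u)"
    by (simp add: ts_def central_moment_sum_def poi_central_moments[OF l] poi_central_moments[OF u]; algebra)
  then show "measure_pmf.expectation (poi2 l u) ?f = 2 * (l + u)^2 + 4 * (l - u)^2 * (l + u)"
    unfolding expand using moments by simp
qed

lemma
  assumes l: "l \<ge> 0" and u: "u \<ge> 0"
  shows integrable_poi2_diff_fourth_central: "integrable (poi2 l u) (\<lambda>x. (real (fst x) - real (snd x) - (l - u))^4)"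
    and expectation_poi2_diff_fourth_central:
      "measure_pmf.expectation (poi2 l u) (\<lambda>x. (real (fst x) - real (snd x) - (l - u))^4) = (l + u) + 3 * (l + u)^2"
proof -
  let ?f = "\<lambda>x. (real (fst x) - real (snd x) - (l - u))^4"
  define ts :: "(real \<times> nat \<times> nat) list" where
    "ts = [(1, 0, 4), (- 4, 1, 3), (6, 2, 2), (- 4, 3, 1), (1, 4, 0)]"
  have expand: "?f = (\<lambda>x. monomial_sum ts (real (fst x) - l) (real (snd x) - u))"
    by (rule ext) (simp add: ts_def monomial_sum_def; algebra)
  note moments = integrable_expectation_poi2_monomial_sum[OF l u, of ts]
  show "integrable (poi2 l u) ?f"
    unfolding expand using moments ..
  have "central_moment_sum ts l u = (l + u) + 3 * (l + u)^2"
    by (simp add: ts_def central_moment_sum_def poi_central_moments[OF l] poi_central_moments[OF u]; algebra)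
  then show "measure_pmf.expectation (poi2 l u) ?f = (l + u) + 3 * (l + u)^2"
    unfolding expand using moments by simp
qed

lemma
  assumes l: "l \<ge> 0" and u: "u \<ge> 0"
  shows integrable_poi2_sum_fourth_central: "integrable (poi2 l u) (\<lambda>x. (real (fst x) + real (snd x) - (l + u))^4)"
    and expectation_poi2_sum_fourth_central:
      "measure_pmf.expectation (poi2 l u) (\<lambda>x. (real (fst x) + real (snd x) - (l + u))^4) = (l + u) + 3 * (l + u)^2"
proof -
  let ?f = "\<lambda>x. (real (fst x) + real (snd x) - (l + u))^4"
  define ts :: "(real \<times> nat \<times> nat) list" where
    "ts = [(1, 0, 4), (4, 1, 3), (6, 2, 2), (4, 3, 1), (1, 4, 0)]"
  have expand: "?f = (\<lambda>x. monomial_sum ts (real (fst x) - l) (real (snd x) - u))"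
    by (rule ext) (simp add: ts_def monomial_sum_def; algebra)
  note moments = integrable_expectation_poi2_monomial_sum[OF l u, of ts]
  show "integrable (poi2 l u) ?f"
    unfolding expand using moments ..
  have "central_moment_sum ts l u = (l + u) + 3 * (l + u)^2"
    by (simp add: ts_def central_moment_sum_def poi_central_moments[OF l] poi_central_moments[OF u]; algebra)
  then show "measure_pmf.expectation (poi2 l u) ?f = (l + u) + 3 * (l + u)^2"
    unfolding expand using moments by simp
qed

lemma
  assumes l: "l \<ge> 0" and u: "u \<ge> 0"
  shows integrable_poi2_diff_square: "integrable (poi2 l u) (\<lambda>x. (real (fst x) - real (snd x))^2)"
    and expectation_poi2_diff_square:
      "measure_pmf.expectation (poi2 l u) (\<lambda>x. (real (fst x) - real (snd x))^2) = (l - u)^2 + (l + u)"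
proof -
  let ?f = "\<lambda>x. (real (fst x) - real (snd x))^2"
  define ts :: "(real \<times> nat \<times> nat) list" where
    "ts = [(u^2 - 2*l*u + l^2, 0, 0), (2*u - 2*l, 0, 1), (1, 0, 2), (- 2*u + 2*l, 1, 0), (- 2, 1, 1), (1, 2, 0)]"
  have expand: "?f = (\<lambda>x. monomial_sum ts (real (fst x) - l) (real (snd x) - u))"
    by (rule ext) (simp add: ts_def monomial_sum_def; algebra)
  note moments = integrable_expectation_poi2_monomial_sum[OF l u, of ts]
  show "integrable (poi2 l u) ?f"
    unfolding expand using moments ..
  have "central_moment_sum ts l u = (l - u)^2 + (l + u)"
    by (simp add: ts_def central_moment_sum_def poi_central_moments[OF l] poi_central_moments[OF u]; algebra)
  then show "measure_pmf.expectation (poi2 l u) ?f = (l - u)^2 + (l + u)"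
    unfolding expand using moments by simp
qed

lemma
  assumes l: "l \<ge> 0" and u: "u \<ge> 0"
  shows integrable_poi2_sum: "integrable (poi2 l u) (\<lambda>x. real (fst x) + real (snd x))"
    and expectation_poi2_sum:
      "measure_pmf.expectation (poi2 l u) (\<lambda>x. real (fst x) + real (snd x)) = l + u"
proof -
  let ?f = "\<lambda>x. real (fst x) + real (snd x)"
  define ts :: "(real \<times> nat \<times> nat) list" where
    "ts = [(u + l, 0, 0), (1, 0, 1), (1, 1, 0)]"
  have expand: "?f = (\<lambda>x. monomial_sum ts (real (fst x) - l) (real (snd x) - u))"
    by (rule ext) (simp add: ts_def monomial_sum_def; algebra)
  note moments = integrable_expectation_poi2_monomial_sum[OF l u, of ts]
  show "integrable (poi2 l u) ?f"
    unfolding expand using moments ..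
  have "central_moment_sum ts l u = l + u"
    by (simp add: ts_def central_moment_sum_def poi_central_moments[OF l] poi_central_moments[OF u]; algebra)
  then show "measure_pmf.expectation (poi2 l u) ?f = l + u"
    unfolding expand using moments by simp
qed

definition joint_counts ::
    "nat \<Rightarrow> real \<Rightarrow> (nat \<Rightarrow> real) \<Rightarrow> (nat \<Rightarrow> real) \<Rightarrow> (nat \<Rightarrow> nat \<times> nat) pmf" where
  "joint_counts n m p q = Pi_pmf {..<n} (0, 0) (\<lambda>i. poi2 (m * p i) (m * q i))"

lemma pair_counts_eq_map_joint_counts:
  "pair_pmf (counts n m p) (counts n m q)
     = map_pmf (\<lambda>h. (\<lambda>i. fst (h i), \<lambda>i. snd (h i))) (joint_counts n m p q)"
  unfolding counts_def joint_counts_def by (rule pair_pmf_Pi_pmf) simp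

lemma
  fixes g :: "nat \<Rightarrow> nat \<times> nat \<Rightarrow> real"
  assumes "\<And>i. i < n \<Longrightarrow> integrable (poi2 (m * p i) (m * q i)) (g i)"
  shows integrable_joint_counts_sum: "integrable (joint_counts n m p q) (\<lambda>h. \<Sum>i<n. g i (h i))"
    and expectation_joint_counts_sum: "measure_pmf.expectation (joint_counts n m p q) (\<lambda>h. \<Sum>i<n. g i (h i))
       = (\<Sum>i<n. measure_pmf.expectation (poi2 (m * p i) (m * q i)) (g i))"
proof -
  have int: "integrable (joint_counts n m p q) (\<lambda>h. g i (h i))" if "i < n" for i
    unfolding joint_counts_def by (rule integrable_Pi_pmf_component) (use assms that in auto)
  thus "integrable (joint_counts n m p q) (\<lambda>h. \<Sum>i<n. g i (h i))" by auto
  have "measure_pmf.expectation (joint_counts n m p q) (\<lambda>h. \<Sum>i<n. g i (h i))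
     = (\<Sum>i<n. measure_pmf.expectation (joint_counts n m p q) (\<lambda>h. g i (h i)))"
    by (rule Bochner_Integration.integral_sum) (use int in auto)
  also have "\<dots> = (\<Sum>i<n. measure_pmf.expectation (poi2 (m * p i) (m * q i)) (g i))"
    unfolding joint_counts_def by (intro sum.cong refl expectation_Pi_pmf_component) auto
  finally show "measure_pmf.expectation (joint_counts n m p q) (\<lambda>h. \<Sum>i<n. g i (h i))
       = (\<Sum>i<n. measure_pmf.expectation (poi2 (m * p i) (m * q i)) (g i))" .
qed

lemma expectation_Zcond:
  fixes g :: "real \<Rightarrow> real"
  shows "measure_pmf.expectation (Zcond n m p q fh) g
     = measure_pmf.expectation (joint_counts n m p q) (\<lambda>h. g (\<Sum>i<n. zterm (fst (h i)) (snd (h i)) / fh i))"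
  unfolding Zcond_def pair_counts_eq_map_joint_counts by (simp add: Zstat_def zterm_def)

lemma Zcond_mean:
  assumes nonneg: "\<And>i. i < n \<Longrightarrow> 0 \<le> m * p i \<and> 0 \<le> m * q i"
  shows "measure_pmf.expectation (Zcond n m p q fh) (\<lambda>z. z) = (\<Sum>i<n. (m * p i - m * q i)^2 / fh i)"
proof -
  have int: "integrable (poi2 (m * p i) (m * q i)) (\<lambda>x. zterm (fst x) (snd x) / fh i)"
    and mean: "measure_pmf.expectation (poi2 (m * p i) (m * q i)) (\<lambda>x. zterm (fst x) (snd x) / fh i)
       = (m * p i - m * q i)^2 / fh i" if "i < n" for i
    using integrable_poi2_zterm[of "m * p i" "m * q i"] expectation_poi2_zterm[of "m * p i" "m * q i"]
      nonneg[OF that] by auto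
  have "measure_pmf.expectation (Zcond n m p q fh) (\<lambda>z. z)
      = (\<Sum>i<n. measure_pmf.expectation (poi2 (m * p i) (m * q i)) (\<lambda>x. zterm (fst x) (snd x) / fh i))"
    unfolding expectation_Zcond by (rule expectation_joint_counts_sum) (rule int)
  also have "\<dots> = (\<Sum>i<n. (m * p i - m * q i)^2 / fh i)"
    by (intro sum.cong refl mean) simp
  finally show ?thesis .
qed

definition zterm_variance :: "real \<Rightarrow> real \<Rightarrow> real" where
  "zterm_variance l u = 2 * (l + u)^2 + 4 * (l - u)^2 * (l + u)"

lemma Zcond_variance:
  assumes nonneg: "\<And>i. i < n \<Longrightarrow> 0 \<le> m * p i \<and> 0 \<le> m * q i"
  shows "measure_pmf.variance (Zcond n m p q fh) (\<lambda>z. z)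
     = (\<Sum>i<n. zterm_variance (m * p i) (m * q i) / (fh i)^2)"
proof -
  define Y where "Y i = (\<lambda>x. (zterm (fst x) (snd x) - (m * p i - m * q i)^2) / fh i)" for i
  define R where "R i = poi2 (m * p i) (m * q i)" for i
  have int_zterm: "integrable (R i) (\<lambda>x. zterm (fst x) (snd x))"
    and mean_zterm: "measure_pmf.expectation (R i) (\<lambda>x. zterm (fst x) (snd x)) = (m * p i - m * q i)^2"
    and int_sq: "integrable (R i) (\<lambda>x. (zterm (fst x) (snd x) - (m * p i - m * q i)^2)^2)"
    and mean_sq: "measure_pmf.expectation (R i) (\<lambda>x. (zterm (fst x) (snd x) - (m * p i - m * q i)^2)^2)
       = zterm_variance (m * p i) (m * q i)" if "i < n" for i
    using nonneg[OF that] unfolding R_def zterm_variance_def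
    by (simp_all add: integrable_poi2_zterm expectation_poi2_zterm
        integrable_poi2_zterm_centered_square expectation_poi2_zterm_centered_square)
  have Y_sq: "(\<lambda>x. (Y i x)^2) = (\<lambda>x. (zterm (fst x) (snd x) - (m * p i - m * q i)^2)^2 / (fh i)^2)" for i
    unfolding Y_def by (simp add: fun_eq_iff power_divide)
  have int_Y: "integrable (R i) (Y i)" and centered_Y: "measure_pmf.expectation (R i) (Y i) = 0"
    and int_Y_sq: "integrable (R i) (\<lambda>x. (Y i x)^2)"
    and mean_Y_sq: "measure_pmf.expectation (R i) (\<lambda>x. (Y i x)^2) = zterm_variance (m * p i) (m * q i) / (fh i)^2"
    if "i < n" for i
    using int_zterm[OF that] mean_zterm[OF that] int_sq[OF that] mean_sq[OF that]
    unfolding Y_sq by (simp_all add: Y_def Bochner_Integration.integral_diff)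
  have deviation: "(\<Sum>i<n. zterm (fst (h i)) (snd (h i)) / fh i) - (\<Sum>i<n. (m * p i - m * q i)^2 / fh i)
      = (\<Sum>i<n. Y i (h i))" for h
    unfolding Y_def by (simp add: sum_subtractf diff_divide_distrib)
  have "measure_pmf.variance (Zcond n m p q fh) (\<lambda>z. z)
      = measure_pmf.expectation (Zcond n m p q fh) (\<lambda>z. (z - (\<Sum>i<n. (m * p i - m * q i)^2 / fh i))^2)"
    by (simp only: Zcond_mean[OF nonneg])
  also have "\<dots> = measure_pmf.expectation (Pi_pmf {..<n} (0, 0) R) (\<lambda>h. (\<Sum>i<n. Y i (h i))^2)"
    unfolding expectation_Zcond deviation joint_counts_def R_def ..
  also have "\<dots> = (\<Sum>i<n. zterm_variance (m * p i) (m * q i) / (fh i)^2)"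
    using expectation_Pi_pmf_sum_square[of "{..<n}" R Y] int_Y centered_Y int_Y_sq mean_Y_sq by simp
  finally show ?thesis .
qed

definition fweight :: "real \<Rightarrow> real \<Rightarrow> real \<Rightarrow> real" where
  "fweight K a b = max (\<bar>a - b\<bar> / sqrt K) (max ((a + b) / K) 1)"

lemma fweight_ge_1: "fweight K a b \<ge> 1"
  unfolding fweight_def by simp

lemma fweight_pos: "fweight K a b > 0"
  using fweight_ge_1[of K a b] by linarith

lemma fweight_ge_diff: "fweight K a b \<ge> \<bar>a - b\<bar> / sqrt K"
  unfolding fweight_def by simp

lemma fweight_ge_sum: "fweight K a b \<ge> (a + b) / K"
  unfolding fweight_def by simp

lemma fweight_cases: "fweight K a b = 1 \<or> fweight K a b = \<bar>a - b\<bar> / sqrt K \<or> fweight K a b = (a + b) / K"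
  unfolding fweight_def by linarith

lemma fweight_le_sum:
  "l \<ge> 0 \<Longrightarrow> u \<ge> 0 \<Longrightarrow> K > 0 \<Longrightarrow> fweight K l u \<le> \<bar>l - u\<bar> / sqrt K + (l + u) / K + 1"
  unfolding fweight_def by (auto simp: max_def)

lemma fhat_eq_fweight: "real n \<le> m \<Longrightarrow> fhat n m a b = fweight (m / real n) (real a) (real b)"
  unfolding fhat_def fweight_def by simp

lemma abs_div_sqrt_le:
  fixes x f K :: real
  assumes K: "K > 0" and f: "f > 0"
  shows "\<bar>x\<bar> / sqrt K \<le> x^2 / (2 * K * f) + f / 2"
proof -
  have sK: "sqrt K > 0" "(sqrt K)^2 = K" using K by auto
  have "0 \<le> (\<bar>x\<bar> / sqrt K - f)^2" by simp
  hence "2 * f * (\<bar>x\<bar> / sqrt K) \<le> x^2 / K + f^2"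
    using sK by (simp add: power2_eq_square field_simps)
  hence "\<bar>x\<bar> / sqrt K \<le> (x^2 / K + f^2) / (2 * f)" using f by (simp add: field_simps)
  also have "\<dots> = x^2 / (2 * K * f) + f / 2" using f K by (simp add: field_simps power2_eq_square)
  finally show ?thesis .
qed

lemma
  assumes K: "K \<ge> 1" and l: "l \<ge> 0" and u: "u \<ge> 0"
  shows integrable_poi2_fweight: "integrable (poi2 l u) (\<lambda>x. fweight K (real (fst x)) (real (snd x)))"
    and expectation_poi2_fweight_le:
      "measure_pmf.expectation (poi2 l u) (\<lambda>x. fweight K (real (fst x)) (real (snd x))) \<le> 4 * fweight K l u"
proof -
  define f where "f = fweight K l u"
  have f1: "f \<ge> 1" unfolding f_def by (rule fweight_ge_1)
  have K0: "K > 0" using K by simp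
  define G where "G x = (real (fst x) - real (snd x))^2 / (2 * K * f) + f / 2 + (real (fst x) + real (snd x)) / K + 1" for x
  note i1 = integrable_poi2_diff_square[OF l u] and i2 = integrable_poi2_sum[OF l u]
  have iG: "integrable (poi2 l u) G"
    unfolding G_def using i1 i2 by auto
  have eG: "measure_pmf.expectation (poi2 l u) G = ((l - u)^2 + (l + u)) / (2 * K * f) + f / 2 + (l + u) / K + 1"
    unfolding G_def using i1 i2 expectation_poi2_diff_square[OF l u] expectation_poi2_sum[OF l u]
    by (simp add: Bochner_Integration.integral_add Bochner_Integration.integral_diff)
  have bound: "fweight K a b \<le> (a - b)^2 / (2 * K * f) + f / 2 + (a + b) / K + 1" if "a \<ge> 0" "b \<ge> 0" for a b :: real
  proof -
    have "\<bar>a - b\<bar> / sqrt K \<le> (a - b)^2 / (2 * K * f) + f / 2"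
      using abs_div_sqrt_le[OF K0, of f "a - b"] f1 by simp
    moreover have "(a + b) / K \<ge> 0" using that K0 by simp
    moreover have "(a - b)^2 / (2 * K * f) \<ge> 0" using K0 f1 by simp
    ultimately show ?thesis unfolding fweight_def using f1 by simp
  qed
  have le_G: "fweight K (real (fst x)) (real (snd x)) \<le> G x" for x
    unfolding G_def by (rule bound) auto
  show iF: "integrable (poi2 l u) (\<lambda>x. fweight K (real (fst x)) (real (snd x)))"
    by (rule Bochner_Integration.integrable_bound[OF iG])
       (use le_G fweight_pos[of K] in \<open>auto intro!: AE_pmfI intro: order_trans[OF _ abs_ge_self] simp: less_imp_le\<close>)
  have "(l - u)^2 / K \<le> f^2"
  proof -
    have "(\<bar>l - u\<bar> / sqrt K)^2 \<le> f^2"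
      using fweight_ge_diff[of l u K] unfolding f_def[symmetric] using K0 by (intro power_mono) auto
    thus ?thesis using K0 by (simp add: power_divide)
  qed
  hence "(l - u)^2 / (2 * K * f) \<le> f / 2"
    using f1 K0 by (simp add: field_simps power2_eq_square)
  moreover have "(l + u) / (2 * K * f) \<le> f / 2"
  proof -
    have "(l + u) / (2 * K * f) = ((l + u) / K) / (2 * f)" by simp
    also have "\<dots> \<le> f / (2 * f)"
      using fweight_ge_sum[of l u K] f1 unfolding f_def[symmetric] by (intro divide_right_mono) auto
    also have "\<dots> \<le> f / 2" using f1 by (simp add: field_simps)
    finally show ?thesis .
  qed
  moreover have "(l + u) / K \<le> f" unfolding f_def by (rule fweight_ge_sum)
  ultimately have "measure_pmf.expectation (poi2 l u) G \<le> 4 * f"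
    unfolding eG add_divide_distrib using f1 by linarith
  with Bochner_Integration.integral_mono[OF iF iG le_G]
  show "measure_pmf.expectation (poi2 l u) (\<lambda>x. fweight K (real (fst x)) (real (snd x))) \<le> 4 * fweight K l u"
    unfolding f_def by linarith
qed

lemma integrable_inverse_fweight: "integrable (measure_pmf M) (\<lambda>x. 1 / fweight K (a x) (b x))"
  by (rule measure_pmf.integrable_const_bound[where B = 1])
     (auto intro!: AE_pmfI simp: fweight_ge_1 fweight_pos less_imp_le)

lemma inverse_square_le_one: "(F::real) \<ge> 1 \<Longrightarrow> 1 / F^2 \<le> 1"
  by (simp add: field_simps one_le_power)

lemma integrable_inverse_square_fweight: "integrable (measure_pmf M) (\<lambda>x. 1 / (fweight K (a x) (b x))^2)"
  by (rule measure_pmf.integrable_const_bound[where B = 1])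
     (auto intro!: AE_pmfI inverse_square_le_one simp: fweight_ge_1)

lemma inverse_square_le_of_far:
  fixes F f t tau :: real
  assumes F: "F \<ge> 1" and f: "f > 0" and tau: "tau > 0"
    and far: "F < f / 4 \<Longrightarrow> \<bar>t\<bar> \<ge> tau"
  shows "1 / F^2 \<le> 16 / f^2 + t^4 / tau^4"
proof (cases "F < f / 4")
  case True
  have "1 \<le> \<bar>t\<bar> / tau" using far[OF True] tau by simp
  hence "1 \<le> (\<bar>t\<bar> / tau)^4" by (simp add: one_le_power)
  hence "1 \<le> t^4 / tau^4" by (simp add: power_divide power_even_abs)
  moreover have "1 / F^2 \<le> 1" using F by (rule inverse_square_le_one)
  moreover have "16 / f^2 \<ge> 0" by simp
  ultimately show ?thesis by linarith
next
  case False
  hence "(f / 4)^2 \<le> F^2" using f by (intro power_mono) auto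
  hence "1 / F^2 \<le> 16 / f^2" using f F by (simp add: field_simps power2_eq_square)
  moreover have "0 \<le> t^4 / tau^4" using tau by (simp add: zero_le_even_power)
  ultimately show ?thesis by linarith
qed

lemma expectation_inverse_square_le_fourth_moment:
  fixes F T :: "'a \<Rightarrow> real"
  assumes F: "\<And>x. F x \<ge> 1" and f: "f > 0" and tau: "tau > 0"
    and far: "\<And>x. F x < f / 4 \<Longrightarrow> \<bar>T x\<bar> \<ge> tau"
    and int: "integrable (measure_pmf M) (\<lambda>x. T x ^ 4)"
  shows "measure_pmf.expectation M (\<lambda>x. 1 / (F x)^2)
      \<le> 16 / f^2 + measure_pmf.expectation M (\<lambda>x. T x ^ 4) / tau^4"
proof -
  have "integrable M (\<lambda>x. 1 / (F x)^2)"
    by (rule measure_pmf.integrable_const_bound[where B = 1])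
       (auto intro!: AE_pmfI inverse_square_le_one F)
  moreover have "integrable M (\<lambda>x. 16 / f^2 + T x ^ 4 / tau^4)"
    using int by simp
  ultimately have "measure_pmf.expectation M (\<lambda>x. 1 / (F x)^2)
      \<le> measure_pmf.expectation M (\<lambda>x. 16 / f^2 + T x ^ 4 / tau^4)"
    by (rule Bochner_Integration.integral_mono) (intro inverse_square_le_of_far F f tau far)
  also have "\<dots> = 16 / f^2 + measure_pmf.expectation M (\<lambda>x. T x ^ 4) / tau^4"
    using int by simp
  finally show ?thesis .
qed

lemma fourth_moment_ratio_le:
  fixes s A f :: real
  assumes s: "s \<ge> 1" and A: "A > 0" and f: "f > 0" and sf: "s^2 * f^2 \<le> A^4"
  shows "(s + 3 * s^2) / (3 * A / 4)^4 \<le> 13 / f^2"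
proof -
  have "(s + 3 * s^2) / (3 * A / 4)^4 \<le> 4 * s^2 / (3 * A / 4)^4"
    using s A by (intro divide_right_mono) (auto simp: power2_eq_square)
  also have "\<dots> = 1024 / 81 * (s^2 * f^2 / A^4) / f^2"
    using A f by (simp add: field_simps)
  also have "\<dots> \<le> 1024 / 81 * 1 / f^2"
    using sf A f by (intro divide_right_mono mult_left_mono) (auto simp: field_simps)
  also have "\<dots> \<le> 13 / f^2"
    using f by (intro divide_right_mono) auto
  finally show ?thesis .
qed

lemma expectation_poi2_inverse_square_fweight_le_diff_regime:
  assumes K: "K \<ge> 1" and l: "l \<ge> 0" and u: "u \<ge> 0"
    and large: "fweight K l u > 4" and regime: "fweight K l u = \<bar>l - u\<bar> / sqrt K"
  shows "measure_pmf.expectation (poi2 l u) (\<lambda>x. 1 / (fweight K (real (fst x)) (real (snd x)))^2)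
      \<le> 29 / (fweight K l u)^2"
proof -
  define f where "f = fweight K l u"
  define tau where "tau = 3 * \<bar>l - u\<bar> / 4"
  have sK: "sqrt K > 0" "sqrt K \<ge> 1" "sqrt K * sqrt K = K" using K by auto
  have D: "\<bar>l - u\<bar> = f * sqrt K" using regime sK unfolding f_def by (simp add: field_simps)
  hence D4: "\<bar>l - u\<bar> > 4" using large sK unfolding f_def by (smt (verit) mult_le_cancel_left1)
  have far: "\<bar>real (fst x) - real (snd x) - (l - u)\<bar> \<ge> tau"
    if "fweight K (real (fst x)) (real (snd x)) < f / 4" for x
  proof -
    have "\<bar>real (fst x) - real (snd x)\<bar> / sqrt K < \<bar>l - u\<bar> / sqrt K / 4"
      using fweight_ge_diff[of "real (fst x)" "real (snd x)" K] that unfolding f_def regime by linarith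
    hence "\<bar>real (fst x) - real (snd x)\<bar> < \<bar>l - u\<bar> / 4" using sK by (simp add: field_simps)
    moreover have "\<bar>l - u\<bar> \<le> \<bar>real (fst x) - real (snd x)\<bar> + \<bar>real (fst x) - real (snd x) - (l - u)\<bar>"
      using abs_triangle_ineq4[of "real (fst x) - real (snd x)" "real (fst x) - real (snd x) - (l - u)"]
      by simp
    ultimately show ?thesis unfolding tau_def by argo
  qed
  have "l + u \<le> K * f"
    using fweight_ge_sum[of l u K] sK unfolding f_def by (simp add: field_simps)
  also have "\<dots> = \<bar>l - u\<bar> * sqrt K"
    unfolding D using K by (simp add: mult_ac)
  finally have "l + u \<le> \<bar>l - u\<bar> * sqrt K" .
  hence "(l + u)^2 * f^2 \<le> \<bar>l - u\<bar>^4"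
    using l u D sK by (smt (verit, best) mult_right_mono power2_eq_square power4_eq_xxxx
        zero_le_mult_iff mult.assoc mult.commute)
  moreover have "l + u \<ge> 1" using D4 l u by linarith
  ultimately have "(l + u + 3 * (l + u)^2) / tau^4 \<le> 13 / f^2"
    unfolding tau_def using fourth_moment_ratio_le[of "l + u" "\<bar>l - u\<bar>" f] D4 large f_def by simp
  moreover have "measure_pmf.expectation (poi2 l u) (\<lambda>x. 1 / (fweight K (real (fst x)) (real (snd x)))^2)
      \<le> 16 / f^2 + (l + u + 3 * (l + u)^2) / tau^4"
    using expectation_inverse_square_le_fourth_moment[OF fweight_ge_1 _ _ far
        integrable_poi2_diff_fourth_central[OF l u]] large D4 unfolding f_def
    by (simp add: expectation_poi2_diff_fourth_central[OF l u] tau_def)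
  ultimately show ?thesis unfolding f_def by simp
qed

lemma expectation_poi2_inverse_square_fweight_le_sum_regime:
  assumes K: "K \<ge> 1" and l: "l \<ge> 0" and u: "u \<ge> 0"
    and large: "fweight K l u > 4" and regime: "fweight K l u = (l + u) / K"
  shows "measure_pmf.expectation (poi2 l u) (\<lambda>x. 1 / (fweight K (real (fst x)) (real (snd x)))^2)
      \<le> 29 / (fweight K l u)^2"
proof -
  define f where "f = fweight K l u"
  define tau where "tau = 3 * (l + u) / 4"
  have S: "l + u = f * K" using regime K unfolding f_def by simp
  hence S4: "l + u > 4" using large K unfolding f_def by (smt (verit) mult_le_cancel_left1)
  have far: "\<bar>real (fst x) + real (snd x) - (l + u)\<bar> \<ge> tau"
    if "fweight K (real (fst x)) (real (snd x)) < f / 4" for x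
  proof -
    have "(real (fst x) + real (snd x)) / K < ((l + u) / 4) / K"
      using fweight_ge_sum[of "real (fst x)" "real (snd x)" K] that unfolding f_def regime
      by (simp add: field_simps)
    hence "real (fst x) + real (snd x) < (l + u) / 4"
      using K by (metis divide_less_cancel order_less_asym less_le_trans zero_less_one)
    thus ?thesis unfolding tau_def by argo
  qed
  have "f \<le> l + u" using S K large unfolding f_def by (simp add: mult_le_cancel_left1)
  hence "(l + u)^2 * f^2 \<le> (l + u)^4"
    using large unfolding f_def by (simp add: power_mono mult_left_mono power4_eq_xxxx power2_eq_square mult_mono)
  hence "(l + u + 3 * (l + u)^2) / tau^4 \<le> 13 / f^2"
    unfolding tau_def using fourth_moment_ratio_le[of "l + u" "l + u" f] S4 large f_def by simp
  moreover have "measure_pmf.expectation (poi2 l u) (\<lambda>x. 1 / (fweight K (real (fst x)) (real (snd x)))^2)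
      \<le> 16 / f^2 + (l + u + 3 * (l + u)^2) / tau^4"
    using expectation_inverse_square_le_fourth_moment[OF fweight_ge_1 _ _ far
        integrable_poi2_sum_fourth_central[OF l u]] large S4 unfolding f_def
    by (simp add: expectation_poi2_sum_fourth_central[OF l u] tau_def)
  ultimately show ?thesis unfolding f_def by simp
qed

lemma expectation_poi2_inverse_square_fweight_le:
  assumes K: "K \<ge> 1" and l: "l \<ge> 0" and u: "u \<ge> 0"
  shows "measure_pmf.expectation (poi2 l u) (\<lambda>x. 1 / (fweight K (real (fst x)) (real (snd x)))^2)
      \<le> 29 / (fweight K l u)^2"
proof -
  define f where "f = fweight K l u"
  have f1: "f \<ge> 1" unfolding f_def by (rule fweight_ge_1)
  consider "f \<le> 4" | "f > 4" "f = \<bar>l - u\<bar> / sqrt K" | "f > 4" "f = (l + u) / K"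
    using fweight_cases[of K l u] unfolding f_def by fastforce
  then show ?thesis
  proof cases
    case 1
    have "measure_pmf.expectation (poi2 l u) (\<lambda>x. 1 / (fweight K (real (fst x)) (real (snd x)))^2)
        \<le> measure_pmf.expectation (poi2 l u) (\<lambda>x. 1)"
      by (rule Bochner_Integration.integral_mono[OF integrable_inverse_square_fweight])
         (auto intro: inverse_square_le_one fweight_ge_1)
    also have "\<dots> \<le> 16 / f^2"
      using 1 f1 power_mono[OF 1, of 2] by (simp add: field_simps)
    also have "\<dots> \<le> 29 / f^2"
      using f1 by (intro divide_right_mono) auto
    finally show ?thesis unfolding f_def .
  qed (use expectation_poi2_inverse_square_fweight_le_diff_regime expectation_poi2_inverse_square_fweight_le_sum_regime
         assms f_def in auto)
qed

lemma inverse_le_amgm: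
  fixes F f :: real
  assumes "F > 0" "f > 0"
  shows "1 / F \<le> (f / F^2 + 1 / f) / 2"
proof -
  have "0 \<le> (f - F)^2" by simp
  hence "2 * f * F \<le> f^2 + F^2" by (simp add: power2_eq_square algebra_simps)
  hence "2 * f * F / (f * F^2) \<le> (f^2 + F^2) / (f * F^2)"
    using assms by (intro divide_right_mono) auto
  thus ?thesis using assms by (simp add: power2_eq_square field_simps)
qed

lemma expectation_poi2_inverse_fweight_le:
  assumes K: "K \<ge> 1" and l: "l \<ge> 0" and u: "u \<ge> 0"
  shows "measure_pmf.expectation (poi2 l u) (\<lambda>x. 1 / fweight K (real (fst x)) (real (snd x))) \<le> 15 / fweight K l u"
proof -
  define f where "f = fweight K l u"
  let ?F = "\<lambda>x. fweight K (real (fst x)) (real (snd x))"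
  have f1: "f \<ge> 1" unfolding f_def by (rule fweight_ge_1)
  have int2: "integrable (poi2 l u) (\<lambda>x. 1 / (?F x)^2)"
    by (rule integrable_inverse_square_fweight)
  have int: "integrable (poi2 l u) (\<lambda>x. (f * (1 / (?F x)^2) + 1 / f) / 2)"
    by (intro Bochner_Integration.integrable_divide Bochner_Integration.integrable_add
        Bochner_Integration.integrable_mult_right int2) simp
  have "measure_pmf.expectation (poi2 l u) (\<lambda>x. 1 / ?F x)
     \<le> measure_pmf.expectation (poi2 l u) (\<lambda>x. (f * (1 / (?F x)^2) + 1 / f) / 2)"
    using inverse_le_amgm[OF fweight_pos, of f K] f1
    by (intro Bochner_Integration.integral_mono[OF integrable_inverse_fweight int]) simp
  also have "\<dots> = (f * measure_pmf.expectation (poi2 l u) (\<lambda>x. 1 / (?F x)^2) + 1 / f) / 2"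
    using Bochner_Integration.integral_add[OF Bochner_Integration.integrable_mult_right[OF int2, of f]
        measure_pmf.integrable_const[of "poi2 l u" "1 / f"]]
      Bochner_Integration.integral_mult_right_zero[of "poi2 l u" f "\<lambda>x. 1 / (?F x)^2", simplified]
    by simp
  also have "\<dots> \<le> (f * (29 / f^2) + 1 / f) / 2"
    using expectation_poi2_inverse_square_fweight_le[OF K l u] f1 unfolding f_def[symmetric]
    by (intro divide_right_mono add_right_mono mult_left_mono) auto
  also have "\<dots> = 15 / f" using f1 by (simp add: power2_eq_square field_simps)
  finally show ?thesis unfolding f_def .
qed

lemma square_div_fweight_le:
  assumes K: "K > 0"
  shows "(l - u)^2 / fweight K l u \<le> \<bar>l - u\<bar> * sqrt K"
proof (cases "l = u")
  case False
  have pos: "\<bar>l - u\<bar> / sqrt K > 0" using False K by simp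
  have "(l - u)^2 / fweight K l u \<le> (l - u)^2 / (\<bar>l - u\<bar> / sqrt K)"
    using fweight_ge_diff mult_pos_pos[OF fweight_pos pos] by (intro divide_left_mono) auto
  also have "\<dots> = \<bar>l - u\<bar> * sqrt K" using False K
    by (simp add: power2_eq_square field_simps abs_mult_self_eq)
  finally show ?thesis .
qed simp

lemma zterm_variance_div_fweight_le:
  assumes K: "K > 0" and l: "l \<ge> 0" and u: "u \<ge> 0"
  shows "zterm_variance l u / (fweight K l u)^2 \<le> 2 * K^2 + 4 * (l + u) * K"
proof -
  define f where "f = fweight K l u"
  have f1: "f \<ge> 1" unfolding f_def by (rule fweight_ge_1)
  have sK: "sqrt K > 0" "(sqrt K)^2 = K" using K by auto
  have "l + u \<le> K * f" using fweight_ge_sum[of l u K] K unfolding f_def by (simp add: field_simps)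
  hence sum2: "(l + u)^2 \<le> K^2 * f^2" using l u by (metis power_mono power_mult_distrib add_nonneg_nonneg)
  have "\<bar>l - u\<bar> \<le> sqrt K * f" using fweight_ge_diff[of l u K] sK unfolding f_def by (simp add: field_simps)
  hence "\<bar>l - u\<bar>^2 \<le> (sqrt K * f)^2" by (intro power_mono) auto
  hence diff2: "(l - u)^2 \<le> K * f^2" using sK by (simp add: power_mult_distrib)
  have "zterm_variance l u \<le> 2 * (K^2 * f^2) + 4 * (K * f^2) * (l + u)"
    unfolding zterm_variance_def using sum2 diff2 l u by (intro add_mono mult_left_mono mult_right_mono) auto
  also have "\<dots> = (2 * K^2 + 4 * (l + u) * K) * f^2" by (simp add: algebra_simps)
  finally show ?thesis unfolding f_def[symmetric] using f1 by (simp add: divide_le_eq)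
qed

lemma prob_greater_le_of_expectation:
  fixes g :: "'a \<Rightarrow> real"
  assumes int: "integrable (measure_pmf M) g" and nonneg: "\<And>x. g x \<ge> 0"
    and c: "c \<ge> 0" and a: "a \<ge> 0" and exp: "measure_pmf.expectation M g \<le> a * c"
  shows "measure_pmf.prob M {x. g x > c} \<le> a"
proof (cases "c = 0")
  case True
  have "measure_pmf.expectation M g = 0"
    using exp True integral_nonneg_AE[of g M] nonneg by (simp add: antisym)
  hence "AE x in M. g x = 0"
    using integral_nonneg_eq_0_iff_AE[OF int] nonneg by simp
  hence "measure_pmf.prob M {x. g x > c} = 0"
    using True by (simp add: AE_measure_pmf_iff measure_pmf_zero_iff disjoint_iff)
  thus ?thesis using a by simp
next
  case False
  hence "measure_pmf.prob M {x. g x > c} \<le> measure_pmf.prob M {x \<in> space (measure_pmf M). g x \<ge> c}"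
    by (intro measure_pmf.finite_measure_mono) auto
  also have "\<dots> \<le> measure_pmf.expectation M g / c"
    using False c nonneg by (intro integral_Markov_inequality_measure[OF int, where A = UNIV]) auto
  also have "\<dots> \<le> a" using exp False c by (simp add: divide_le_eq mult.commute)
  finally show ?thesis .
qed

lemma prob_all_le_ge:
  fixes g1 g2 g3 :: "'a \<Rightarrow> real"
  assumes "measure_pmf.prob M {x. g1 x > c1} \<le> a1" "measure_pmf.prob M {x. g2 x > c2} \<le> a2"
    "measure_pmf.prob M {x. g3 x > c3} \<le> a3"
  shows "measure_pmf.prob M {x. g1 x \<le> c1 \<and> g2 x \<le> c2 \<and> g3 x \<le> c3} \<ge> 1 - (a1 + a2 + a3)"
proof -
  let ?B = "{x. g1 x > c1} \<union> {x. g2 x > c2} \<union> {x. g3 x > c3}"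
  have "measure_pmf.prob M ?B
      \<le> measure_pmf.prob M ({x. g1 x > c1} \<union> {x. g2 x > c2}) + measure_pmf.prob M {x. g3 x > c3}"
    by (rule measure_subadditive) (auto simp: measure_pmf.emeasure_eq_measure)
  also have "measure_pmf.prob M ({x. g1 x > c1} \<union> {x. g2 x > c2})
      \<le> measure_pmf.prob M {x. g1 x > c1} + measure_pmf.prob M {x. g2 x > c2}"
    by (rule measure_subadditive) (auto simp: measure_pmf.emeasure_eq_measure)
  finally have "measure_pmf.prob M ?B \<le> a1 + a2 + a3" using assms by linarith
  moreover have "{x. g1 x \<le> c1 \<and> g2 x \<le> c2 \<and> g3 x \<le> c3} = UNIV - ?B" by auto
  ultimately show ?thesis
    using measure_pmf.prob_compl[of ?B M] by simp
qed

lemma sum_abs_squared_le_weighted: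
  fixes a F :: "'i \<Rightarrow> real"
  assumes F: "\<And>i. i \<in> I \<Longrightarrow> F i > 0"
  shows "(\<Sum>i\<in>I. \<bar>a i\<bar>)^2 \<le> (\<Sum>i\<in>I. (a i)^2 / F i) * (\<Sum>i\<in>I. F i)"
proof -
  have "(\<Sum>i\<in>I. (\<bar>a i\<bar> / sqrt (F i)) * sqrt (F i))^2
      \<le> (\<Sum>i\<in>I. (\<bar>a i\<bar> / sqrt (F i))^2) * (\<Sum>i\<in>I. (sqrt (F i))^2)"
    by (rule Cauchy_Schwarz_ineq_sum)
  moreover have "(\<bar>a i\<bar> / sqrt (F i)) * sqrt (F i) = \<bar>a i\<bar>"
    and "(\<bar>a i\<bar> / sqrt (F i))^2 = (a i)^2 / F i" and "(sqrt (F i))^2 = F i" if "i \<in> I" for i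
    using F[OF that] by (simp_all add: power_divide)
  ultimately show ?thesis by simp
qed

text \<open>By Cauchy--Schwarz, \<open>M\<^sup>2 \<le> S W\<close> for \<open>M = \<Sum> |a\<^sub>i|\<close>, \<open>S = \<Sum> a\<^sub>i\<^sup>2 / F\<^sub>i\<close> and
  \<open>W = \<Sum> F\<^sub>i\<close>, so an upper bound on \<open>W\<close> turns into a lower bound on \<open>S\<close>.\<close>

lemma lower_bound_of_cauchy_schwarz:
  fixes M S W N s :: real
  assumes N: "N > 0" and s: "s > 0" and M: "M \<ge> 0" and S: "S \<ge> 0" and W: "W > 0"
    and CS: "M^2 \<le> S * W" and W_le: "W \<le> 120 * (M / s + 3 * N)"
  shows "1/480 * min (s * M) (M^2 / N) \<le> S"
proof (cases "M = 0")
  case False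
  hence Mp: "M > 0" using M by simp
  have "M^2 / (120 * (M / s + 3 * N)) \<le> M^2 / W"
    using W_le W Mp by (intro divide_left_mono) auto
  also have "\<dots> \<le> S" using CS W by (simp add: divide_le_eq)
  finally have low: "M^2 / (120 * (M / s + 3 * N)) \<le> S" .
  show ?thesis
  proof (cases "M / s \<ge> N")
    case True
    have "1/480 * (s * M) = M^2 / (480 * (M / s))" using s Mp by (simp add: power2_eq_square field_simps)
    also have "\<dots> \<le> M^2 / (120 * (M / s + 3 * N))"
      using True N s Mp by (intro divide_left_mono) auto
    finally show ?thesis using low by linarith
  next
    case False
    have "1/480 * (M^2 / N) = M^2 / (480 * N)" by simp
    also have "\<dots> \<le> M^2 / (120 * (M / s + 3 * N))"
      using False N s Mp by (intro divide_left_mono) (auto intro!: mult_pos_pos add_pos_pos)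
    finally show ?thesis using low by linarith
  qed
qed (use S in simp)

definition count_weight :: "real \<Rightarrow> (nat \<Rightarrow> nat \<times> nat) \<Rightarrow> nat \<Rightarrow> real" where
  "count_weight K h i = fweight K (real (fst (h i))) (real (snd (h i)))"

lemma count_weight_ge_1: "count_weight K h i \<ge> 1"
  unfolding count_weight_def by (rule fweight_ge_1)

context
  fixes n :: nat and m :: real and p q :: "nat \<Rightarrow> real"
  assumes n: "1 \<le> n" and nm: "real n \<le> m" and p: "is_distr n p" and q: "is_distr n q"
begin

lemma scale_ge_1: "m / real n \<ge> 1"
  using n nm by simp

lemma rates_nonneg: "i < n \<Longrightarrow> 0 \<le> m * p i \<and> 0 \<le> m * q i"
  using p q n nm unfolding is_distr_def by auto

lemma sum_abs_rate_diff: "(\<Sum>i<n. \<bar>m * p i - m * q i\<bar>) = m * l1dist n p q"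
proof -
  have "\<bar>m * p i - m * q i\<bar> = m * \<bar>p i - q i\<bar>" for i
    using n nm by (simp add: abs_mult flip: right_diff_distrib)
  thus ?thesis unfolding l1dist_def by (simp add: sum_distrib_left)
qed

lemma sum_rates: "(\<Sum>i<n. m * p i + m * q i) = 2 * m"
  using p q unfolding is_distr_def by (simp add: sum.distrib sum_distrib_left[symmetric])

lemma
  defines "K \<equiv> m / real n"
  shows integrable_conditional_mean:
      "integrable (joint_counts n m p q) (\<lambda>h. \<Sum>i<n. (m * p i - m * q i)^2 / count_weight K h i)"
    and expectation_conditional_mean_le:
      "measure_pmf.expectation (joint_counts n m p q) (\<lambda>h. \<Sum>i<n. (m * p i - m * q i)^2 / count_weight K h i)
         \<le> 15 * (sqrt K * (m * l1dist n p q))"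
proof -
  let ?g = "\<lambda>i x. (m * p i - m * q i)^2 / fweight K (real (fst x)) (real (snd x))"
  have g: "(\<lambda>h. \<Sum>i<n. (m * p i - m * q i)^2 / count_weight K h i) = (\<lambda>h. \<Sum>i<n. ?g i (h i))"
    unfolding count_weight_def ..
  have int: "integrable (poi2 (m * p i) (m * q i)) (?g i)" for i
    using integrable_inverse_fweight[of "poi2 (m * p i) (m * q i)" K "\<lambda>x. real (fst x)" "\<lambda>x. real (snd x)"]
    unfolding divide_inverse by simp
  show "integrable (joint_counts n m p q) (\<lambda>h. \<Sum>i<n. (m * p i - m * q i)^2 / count_weight K h i)"
    unfolding g by (rule integrable_joint_counts_sum) (rule int)
  have "measure_pmf.expectation (poi2 (m * p i) (m * q i)) (?g i) \<le> 15 * (\<bar>m * p i - m * q i\<bar> * sqrt K)"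
    if "i < n" for i
  proof -
    have "measure_pmf.expectation (poi2 (m * p i) (m * q i)) (?g i)
        = (m * p i - m * q i)^2 * measure_pmf.expectation (poi2 (m * p i) (m * q i))
            (\<lambda>x. 1 / fweight K (real (fst x)) (real (snd x)))"
      using Bochner_Integration.integral_mult_right_zero[of "poi2 (m * p i) (m * q i)" "(m * p i - m * q i)^2"
          "\<lambda>x. 1 / fweight K (real (fst x)) (real (snd x))"] by simp
    also have "\<dots> \<le> (m * p i - m * q i)^2 * (15 / fweight K (m * p i) (m * q i))"
      using rates_nonneg[OF that] scale_ge_1 unfolding K_def
      by (intro mult_left_mono expectation_poi2_inverse_fweight_le) auto
    also have "\<dots> = 15 * ((m * p i - m * q i)^2 / fweight K (m * p i) (m * q i))"
      by simp
    also have "\<dots> \<le> 15 * (\<bar>m * p i - m * q i\<bar> * sqrt K)"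
      using square_div_fweight_le[of K "m * p i" "m * q i"] scale_ge_1 unfolding K_def by simp
    finally show ?thesis .
  qed
  hence "measure_pmf.expectation (joint_counts n m p q) (\<lambda>h. \<Sum>i<n. ?g i (h i))
      \<le> (\<Sum>i<n. 15 * (\<bar>m * p i - m * q i\<bar> * sqrt K))"
    unfolding expectation_joint_counts_sum[OF int] by (intro sum_mono) auto
  also have "\<dots> = 15 * (sqrt K * (m * l1dist n p q))"
    by (simp add: sum_abs_rate_diff flip: sum_distrib_left sum_distrib_right)
  finally show "measure_pmf.expectation (joint_counts n m p q)
      (\<lambda>h. \<Sum>i<n. (m * p i - m * q i)^2 / count_weight K h i) \<le> 15 * (sqrt K * (m * l1dist n p q))"
    unfolding g .
qed

lemma
  defines "K \<equiv> m / real n"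
  shows integrable_conditional_variance:
      "integrable (joint_counts n m p q)
         (\<lambda>h. \<Sum>i<n. zterm_variance (m * p i) (m * q i) / (count_weight K h i)^2)"
    and expectation_conditional_variance_le:
      "measure_pmf.expectation (joint_counts n m p q)
         (\<lambda>h. \<Sum>i<n. zterm_variance (m * p i) (m * q i) / (count_weight K h i)^2) \<le> 290 * m^2 / real n"
proof -
  let ?g = "\<lambda>i x. zterm_variance (m * p i) (m * q i) / (fweight K (real (fst x)) (real (snd x)))^2"
  have g: "(\<lambda>h. \<Sum>i<n. zterm_variance (m * p i) (m * q i) / (count_weight K h i)^2) = (\<lambda>h. \<Sum>i<n. ?g i (h i))"
    unfolding count_weight_def ..
  have int: "integrable (poi2 (m * p i) (m * q i)) (?g i)" for i
    using integrable_inverse_square_fweight[of "poi2 (m * p i) (m * q i)" K "\<lambda>x. real (fst x)" "\<lambda>x. real (snd x)"]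
    unfolding divide_inverse by simp
  show "integrable (joint_counts n m p q) (\<lambda>h. \<Sum>i<n. zterm_variance (m * p i) (m * q i) / (count_weight K h i)^2)"
    unfolding g by (rule integrable_joint_counts_sum) (rule int)
  have "measure_pmf.expectation (poi2 (m * p i) (m * q i)) (?g i)
      \<le> 29 * (2 * K^2 + 4 * (m * p i + m * q i) * K)" if "i < n" for i
  proof -
    have V: "zterm_variance (m * p i) (m * q i) \<ge> 0"
      using rates_nonneg[OF that] unfolding zterm_variance_def by simp
    have "measure_pmf.expectation (poi2 (m * p i) (m * q i)) (?g i)
        = zterm_variance (m * p i) (m * q i) * measure_pmf.expectation (poi2 (m * p i) (m * q i))
            (\<lambda>x. 1 / (fweight K (real (fst x)) (real (snd x)))^2)"
      using Bochner_Integration.integral_mult_right_zero[of "poi2 (m * p i) (m * q i)"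
          "zterm_variance (m * p i) (m * q i)" "\<lambda>x. 1 / (fweight K (real (fst x)) (real (snd x)))^2"] by simp
    also have "\<dots> \<le> zterm_variance (m * p i) (m * q i) * (29 / (fweight K (m * p i) (m * q i))^2)"
      using rates_nonneg[OF that] scale_ge_1 V unfolding K_def
      by (intro mult_left_mono expectation_poi2_inverse_square_fweight_le) auto
    also have "\<dots> = 29 * (zterm_variance (m * p i) (m * q i) / (fweight K (m * p i) (m * q i))^2)"
      by simp
    also have "\<dots> \<le> 29 * (2 * K^2 + 4 * (m * p i + m * q i) * K)"
      using zterm_variance_div_fweight_le[of K "m * p i" "m * q i"] rates_nonneg[OF that] scale_ge_1
      unfolding K_def by simp
    finally show ?thesis .
  qed
  hence "measure_pmf.expectation (joint_counts n m p q) (\<lambda>h. \<Sum>i<n. ?g i (h i))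
      \<le> (\<Sum>i<n. 29 * (2 * K^2 + 4 * (m * p i + m * q i) * K))"
    unfolding expectation_joint_counts_sum[OF int] by (intro sum_mono) auto
  also have "\<dots> = 29 * (2 * K^2 * real n + 4 * K * (2 * m))"
    using sum_rates by (simp add: sum.distrib sum_distrib_left[symmetric] sum_distrib_right[symmetric]
        mult.commute mult.left_commute)
  also have "\<dots> = 290 * m^2 / real n"
    unfolding K_def using n by (simp add: power2_eq_square field_simps)
  finally show "measure_pmf.expectation (joint_counts n m p q)
      (\<lambda>h. \<Sum>i<n. zterm_variance (m * p i) (m * q i) / (count_weight K h i)^2) \<le> 290 * m^2 / real n"
    unfolding g .
qed

lemma
  defines "K \<equiv> m / real n"
  shows integrable_weight_sum: "integrable (joint_counts n m p q) (\<lambda>h. \<Sum>i<n. count_weight K h i)"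
    and expectation_weight_sum_le:
      "measure_pmf.expectation (joint_counts n m p q) (\<lambda>h. \<Sum>i<n. count_weight K h i)
         \<le> 4 * (m * l1dist n p q / sqrt K + 3 * real n)"
proof -
  let ?g = "\<lambda>i x. fweight K (real (fst x)) (real (snd x))"
  have g: "(\<lambda>h. \<Sum>i<n. count_weight K h i) = (\<lambda>h. \<Sum>i<n. ?g i (h i))"
    unfolding count_weight_def ..
  have int: "integrable (poi2 (m * p i) (m * q i)) (?g i)" if "i < n" for i
    using integrable_poi2_fweight rates_nonneg[OF that] scale_ge_1 unfolding K_def by simp
  show "integrable (joint_counts n m p q) (\<lambda>h. \<Sum>i<n. count_weight K h i)"
    unfolding g by (rule integrable_joint_counts_sum) (rule int)
  have "measure_pmf.expectation (poi2 (m * p i) (m * q i)) (?g i)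
      \<le> 4 * (\<bar>m * p i - m * q i\<bar> / sqrt K + (m * p i + m * q i) / K + 1)" if "i < n" for i
  proof -
    have "measure_pmf.expectation (poi2 (m * p i) (m * q i)) (?g i) \<le> 4 * fweight K (m * p i) (m * q i)"
      using expectation_poi2_fweight_le rates_nonneg[OF that] scale_ge_1 unfolding K_def by simp
    also have "\<dots> \<le> 4 * (\<bar>m * p i - m * q i\<bar> / sqrt K + (m * p i + m * q i) / K + 1)"
      using fweight_le_sum[of "m * p i" "m * q i" K] rates_nonneg[OF that] scale_ge_1 unfolding K_def by simp
    finally show ?thesis .
  qed
  moreover have "measure_pmf.expectation (joint_counts n m p q) (\<lambda>h. \<Sum>i<n. ?g i (h i))
      = (\<Sum>i<n. measure_pmf.expectation (poi2 (m * p i) (m * q i)) (?g i))"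
    by (rule expectation_joint_counts_sum) (rule int)
  ultimately have "measure_pmf.expectation (joint_counts n m p q) (\<lambda>h. \<Sum>i<n. ?g i (h i))
      \<le> (\<Sum>i<n. 4 * (\<bar>m * p i - m * q i\<bar> / sqrt K + (m * p i + m * q i) / K + 1))"
    by (auto intro: sum_mono)
  also have "\<dots> = 4 * (m * l1dist n p q / sqrt K + 2 * m / K + real n)"
    using sum_abs_rate_diff sum_rates
    by (simp add: sum.distrib sum_divide_distrib[symmetric] sum_distrib_left[symmetric])
  also have "2 * m / K = 2 * real n"
    unfolding K_def using n nm by simp
  finally show "measure_pmf.expectation (joint_counts n m p q) (\<lambda>h. \<Sum>i<n. count_weight K h i)
      \<le> 4 * (m * l1dist n p q / sqrt K + 3 * real n)"
    unfolding g by simp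
qed

lemma prob_good_weights:
  defines "K \<equiv> m / real n" and "d \<equiv> l1dist n p q"
  shows "measure_pmf.prob (joint_counts n m p q)
     {h. (\<Sum>i<n. (m * p i - m * q i)^2 / count_weight K h i) \<le> 450 * (sqrt K * (m * d))
       \<and> (\<Sum>i<n. zterm_variance (m * p i) (m * q i) / (count_weight K h i)^2) \<le> 8700 * m^2 / real n
       \<and> (\<Sum>i<n. count_weight K h i) \<le> 120 * (m * d / sqrt K + 3 * real n)} \<ge> 9/10"
proof -
  have K: "K > 0" unfolding K_def using scale_ge_1 by simp
  have d: "d \<ge> 0" unfolding d_def l1dist_def by (simp add: sum_nonneg)
  have w: "count_weight K h i > 0" and w0: "count_weight K h i \<noteq> 0" for h i
    using count_weight_ge_1[of K h i] by simp_all
  have "measure_pmf.prob (joint_counts n m p q)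
      {h. (\<Sum>i<n. (m * p i - m * q i)^2 / count_weight K h i) > 450 * (sqrt K * (m * d))} \<le> 1/30"
    using expectation_conditional_mean_le K d w n nm unfolding K_def d_def
    by (intro prob_greater_le_of_expectation integrable_conditional_mean sum_nonneg divide_nonneg_pos)
       (auto simp: mult_ac)
  moreover have "measure_pmf.prob (joint_counts n m p q)
      {h. (\<Sum>i<n. zterm_variance (m * p i) (m * q i) / (count_weight K h i)^2) > 8700 * m^2 / real n} \<le> 1/30"
    using expectation_conditional_variance_le rates_nonneg w n unfolding K_def
    by (intro prob_greater_le_of_expectation integrable_conditional_variance sum_nonneg divide_nonneg_pos)
       (auto simp: zterm_variance_def w0[unfolded K_def])
  moreover have "measure_pmf.prob (joint_counts n m p q)
      {h. (\<Sum>i<n. count_weight K h i) > 120 * (m * d / sqrt K + 3 * real n)} \<le> 1/30"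
    using expectation_weight_sum_le K d w n nm unfolding K_def d_def
    by (intro prob_greater_le_of_expectation integrable_weight_sum sum_nonneg) (auto simp: less_imp_le)
  ultimately show ?thesis
    using prob_all_le_ge[where M = "joint_counts n m p q"] by fastforce
qed

lemma powr_three_halves_div_sqrt: "m powr (3/2) * d / sqrt (real n) = sqrt (m / real n) * (m * d)"
proof -
  have "m powr (3/2) = m powr (1 + 1/2)" by simp
  also have "\<dots> = m powr 1 * m powr (1/2)" by (rule powr_add)
  also have "\<dots> = m * sqrt m" using n nm by (simp add: powr_half_sqrt)
  finally show ?thesis using n by (simp add: real_sqrt_divide)
qed

lemma Zcond_bounds_of_good_weights:
  defines "K \<equiv> m / real n" and "d \<equiv> l1dist n p q"
  assumes mean_le: "(\<Sum>i<n. (m * p i - m * q i)^2 / count_weight K h i) \<le> 450 * (sqrt K * (m * d))"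
    and variance_le: "(\<Sum>i<n. zterm_variance (m * p i) (m * q i) / (count_weight K h i)^2) \<le> 8700 * m^2 / real n"
    and weights_le: "(\<Sum>i<n. count_weight K h i) \<le> 120 * (m * d / sqrt K + 3 * real n)"
  shows "1/480 * min (m powr (3/2) * d / sqrt (real n)) (m^2 * d^2 / real n)
           \<le> measure_pmf.expectation (Zcond n m p q (count_weight K h)) (\<lambda>z. z)
      \<and> measure_pmf.expectation (Zcond n m p q (count_weight K h)) (\<lambda>z. z) \<le> 450 * (m powr (3/2) * d / sqrt (real n))
      \<and> measure_pmf.variance (Zcond n m p q (count_weight K h)) (\<lambda>z. z) \<le> 8700 * m^2 / real n"
proof -
  note mean = Zcond_mean[where n = n and m = m and p = p and q = q and fh = "count_weight K h", OF rates_nonneg]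
  have w: "count_weight K h i > 0" for i using count_weight_ge_1[of K h i] by simp
  have W: "(\<Sum>i<n. count_weight K h i) > 0"
    using n w by (intro sum_pos) (auto simp: lessThan_empty_iff)
  have "(m * d)^2 \<le> (\<Sum>i<n. (m * p i - m * q i)^2 / count_weight K h i) * (\<Sum>i<n. count_weight K h i)"
    using sum_abs_squared_le_weighted[of "{..<n}" "count_weight K h" "\<lambda>i. m * p i - m * q i"] w
    unfolding d_def sum_abs_rate_diff by simp
  hence "1/480 * min (sqrt K * (m * d)) ((m * d)^2 / real n) \<le> (\<Sum>i<n. (m * p i - m * q i)^2 / count_weight K h i)"
    using weights_le n nm scale_ge_1 w W unfolding K_def d_def l1dist_def
    by (intro lower_bound_of_cauchy_schwarz sum_nonneg divide_nonneg_pos mult_nonneg_nonneg)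
       (auto simp: less_imp_le)
  thus ?thesis
    using mean_le variance_le Zcond_variance[where n = n and m = m and p = p and q = q and fh = "count_weight K h", OF rates_nonneg]
    unfolding powr_three_halves_div_sqrt[of d, folded K_def] by (simp add: mean power_mult_distrib)
qed

lemma prob_Zcond_bounds:
  "measure_pmf.prob (pair_pmf (counts n m p) (counts n m q))
     {(tX, tY). let fh = (\<lambda>i. fhat n m (tX i) (tY i)); D = Zcond n m p q fh; d = l1dist n p q
        in 1/480 * min (m powr (3/2) * d / sqrt (real n)) (m^2 * d^2 / real n) \<le> measure_pmf.expectation D (\<lambda>z. z)
         \<and> measure_pmf.expectation D (\<lambda>z. z) \<le> 450 * (m powr (3/2) * d / sqrt (real n))
         \<and> measure_pmf.variance D (\<lambda>z. z) \<le> 8700 * m^2 / real n} \<ge> 9/10"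
  (is "_ \<le> measure_pmf.prob _ ?S")
proof -
  define split_counts :: "(nat \<Rightarrow> nat \<times> nat) \<Rightarrow> (nat \<Rightarrow> nat) \<times> (nat \<Rightarrow> nat)" where
    "split_counts h = (\<lambda>i. fst (h i), \<lambda>i. snd (h i))" for h
  let ?Good = "{h. (\<Sum>i<n. (m * p i - m * q i)^2 / count_weight (m / real n) h i)
                     \<le> 450 * (sqrt (m / real n) * (m * l1dist n p q))
       \<and> (\<Sum>i<n. zterm_variance (m * p i) (m * q i) / (count_weight (m / real n) h i)^2) \<le> 8700 * m^2 / real n
       \<and> (\<Sum>i<n. count_weight (m / real n) h i) \<le> 120 * (m * l1dist n p q / sqrt (m / real n) + 3 * real n)}"
  have "(\<lambda>i. fhat n m (fst (h i)) (snd (h i))) = count_weight (m / real n) h" for h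
    using nm by (simp add: fun_eq_iff fhat_eq_fweight count_weight_def)
  hence "?Good \<subseteq> split_counts -` ?S"
    using Zcond_bounds_of_good_weights by (auto simp: split_counts_def Let_def)
  hence "measure_pmf.prob (joint_counts n m p q) ?Good \<le> measure_pmf.prob (joint_counts n m p q) (split_counts -` ?S)"
    by (intro measure_pmf.finite_measure_mono) auto
  also have "\<dots> = measure_pmf.prob (pair_pmf (counts n m p) (counts n m q)) ?S"
    unfolding pair_counts_eq_map_joint_counts split_counts_def by simp
  finally show ?thesis using prob_good_weights by linarith
qed

end

theorem lemma2p3:
  shows "\<exists>c1 c2 c3 :: real. c1 > 0 \<and> c2 > 0 \<and> c3 > 0 \<and>
    (\<forall>(n::nat) (m::real) p q. 1 \<le> n \<longrightarrow> real n \<le> m \<longrightarrow> is_distr n p \<longrightarrow> is_distr n q \<longrightarrow>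
      measure_pmf.prob (pair_pmf (counts n m p) (counts n m q))
        {(tX, tY). let fh = (\<lambda>i. fhat n m (tX i) (tY i));
                       D = Zcond n m p q fh;
                       d = l1dist n p q
                   in c1 * min (m powr (3/2) * d / sqrt (real n)) (m^2 * d^2 / real n)
                        \<le> measure_pmf.expectation D (\<lambda>z. z)
                    \<and> measure_pmf.expectation D (\<lambda>z. z) \<le> c2 * (m powr (3/2) * d / sqrt (real n))
                    \<and> measure_pmf.variance D (\<lambda>z. z) \<le> c3 * m^2 / real n}
      \<ge> 9/10)"
  by (rule exI[of _ "1/480"], rule exI[of _ 450], rule exI[of _ 8700]) (use prob_Zcond_bounds in simp)

end
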